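(* Let $G$ be a finite group and let $H$ be a $2$-subgroup of $G$. Then $H$ is a perfect code of $G$ if and only if, for each $a\in N_G(H)\setminus H$ with $a^2\in H$, the subgroup $H$ has a complement in $H\langle a\rangle$.
   Context: For a group $G$ with identity $e$ and an inverse-closed subset $S\subseteq G\setminus\{e\}$, the Cayley graph $\mathrm{Cay}(G,S)$ has vertex set $G$ and edges $\{g,sg\}$ for $s\in S$, $g\in G$. A perfect code in a graph is an independent set $C$ of vertices such that every vertex outside $C$ is adjacent to exactly one vertex of $C$. A subgroup $H$ of $G$ is a perfect code of $G$ if some Cayley graph of $G$ admits $H$ as a perfect code. $N_G(H)$ is the normalizer of $H$ in $G$. *)

theory Defs
  imports "HOL-Algebra.Algebra"
begin

definition cay_adj :: "('a, 'b) monoid_scheme \<Rightarrow> 'a set \<Rightarrow> 'a \<Rightarrow> 'a \<Rightarrow> bool" where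
  "cay_adj G S x y \<longleftrightarrow> x \<in> carrier G \<and> y \<in> carrier G \<and>
     (\<exists>s\<in>S. y = s \<otimes>\<^bsub>G\<^esub> x)"

definition cayley_set :: "('a, 'b) monoid_scheme \<Rightarrow> 'a set \<Rightarrow> bool" where
  "cayley_set G S \<longleftrightarrow> S \<subseteq> carrier G - {\<one>\<^bsub>G\<^esub>} \<and>
     (\<forall>s\<in>S. inv\<^bsub>G\<^esub> s \<in> S)"

definition cay_perfect_code :: "('a, 'b) monoid_scheme \<Rightarrow> 'a set \<Rightarrow> 'a set \<Rightarrow> bool" where
  "cay_perfect_code G S C \<longleftrightarrow> C \<subseteq> carrier G \<and>
     (\<forall>x\<in>C. \<forall>y\<in>C. \<not> cay_adj G S x y) \<and>
     (\<forall>v\<in>carrier G - C. \<exists>!c. c \<in> C \<and> cay_adj G S v c)"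

definition subgroup_perfect_code :: "('a, 'b) monoid_scheme \<Rightarrow> 'a set \<Rightarrow> bool" where
  "subgroup_perfect_code G H \<longleftrightarrow> (\<exists>S. cayley_set G S \<and> cay_perfect_code G S H)"

definition is_complement :: "('a, 'b) monoid_scheme \<Rightarrow> 'a set \<Rightarrow> 'a set \<Rightarrow> 'a set \<Rightarrow> bool" where
  "is_complement G K H L \<longleftrightarrow> subgroup L G \<and> L \<subseteq> K \<and>
     H \<inter> L = {\<one>\<^bsub>G\<^esub>} \<and> H <#>\<^bsub>G\<^esub> L = K"

end

theory Submission
  imports Defs
begin

(*
  H is a perfect code of G iff the right cosets of H other than H itself have an
  inverse-closed transversal S: S is the connection set, and the code vertex adjacent to v
  is s v for the unique s in S that lies in H v^-1.

  Such a transversal is built separately on each pair HxH, Hx^-1H of mutually inverse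
  double cosets, by matching each right coset R in HxH with a right coset R' in Hx^-1H and
  putting into S some e in R with e^-1 in R' (any R and R' admit such an e).  If
  HxH <> Hx^-1H, both double cosets contain the same number of right cosets and any
  bijection between them works.  If HxH = Hx^-1H and x does not normalize H, the number of
  right cosets in HxH is a divisor of |H| = 2^k different from 1, hence even, so these cosets
  can be matched among themselves.  If x normalizes H, then Hx is the only right coset in
  HxH, and S has to contain an involution e of Hx; such an e exists iff {1, e} is a
  complement of H in H<x>, which is the union of H and Hx.
*)

lemma card_eq_mult_card_image:
  assumes "finite A" "\<And>b. b \<in> f ` A \<Longrightarrow> card {a \<in> A. f a = b} = k"
  shows "card A = k * card (f ` A)"
proof -
  have "{b \<in> f ` A. f a = b} = {f a}" if "a \<in> A" for a
    using that by auto
  then have "card A = (\<Sum>a\<in>A. card {b \<in> f ` A. f a = b})"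
    by simp
  also have "\<dots> = k * card (f ` A)"
    using sum_multicount[of A "f ` A" "\<lambda>a b. f a = b" k] assms by auto
  finally show ?thesis .
qed

lemma even_if_dvd_two_power:
  assumes "(d::nat) dvd 2 ^ k" "d \<noteq> 1"
  shows "even d"
proof (rule ccontr)
  assume "odd d"
  then have "coprime d (2 ^ k)" by simp
  then show False using assms by (metis coprime_absorb_left nat_dvd_1_iff_1)
qed

section \<open>Inverse-closed transversals\<close>

definition inv_closed_transversal :: "('a, 'b) monoid_scheme \<Rightarrow> 'a set set \<Rightarrow> 'a set \<Rightarrow> bool" where
  "inv_closed_transversal G \<T> S \<longleftrightarrow>
     S \<subseteq> \<Union>\<T> \<and> (\<forall>s\<in>S. inv\<^bsub>G\<^esub> s \<in> S) \<and> (\<forall>R\<in>\<T>. \<exists>!s. s \<in> S \<and> s \<in> R)"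

lemma inv_closed_transversal_Union:
  assumes "\<And>\<T>. \<T> \<in> \<F> \<Longrightarrow> \<exists>S. inv_closed_transversal G \<T> S"
    and "pairwise (\<lambda>\<T> \<T>'. disjnt (\<Union>\<T>) (\<Union>\<T>')) \<F>"
  shows "\<exists>S. inv_closed_transversal G (\<Union>\<F>) S"
proof -
  obtain sel where sel: "\<And>\<T>. \<T> \<in> \<F> \<Longrightarrow> inv_closed_transversal G \<T> (sel \<T>)"
    using assms(1) by metis
  have sel_sub: "sel \<T> \<subseteq> \<Union>\<T>"
    and sel_inv: "\<And>s. s \<in> sel \<T> \<Longrightarrow> inv\<^bsub>G\<^esub> s \<in> sel \<T>"
    and sel_unique: "\<And>R. R \<in> \<T> \<Longrightarrow> \<exists>!s. s \<in> sel \<T> \<and> s \<in> R"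
    if "\<T> \<in> \<F>" for \<T>
    using sel[OF that] by (auto simp: inv_closed_transversal_def)
  have same_family: "\<T>' = \<T>"
    if "\<T> \<in> \<F>" "\<T>' \<in> \<F>" "R \<in> \<T>" "s \<in> R" "s \<in> sel \<T>'" for \<T> \<T>' R s
  proof -
    have "s \<in> \<Union>\<T>'" using sel_sub that(2,5) by blast
    then show ?thesis
      using assms(2) that(1-4) unfolding pairwise_def disjnt_def by blast
  qed
  have "inv_closed_transversal G (\<Union>\<F>) (\<Union>(sel ` \<F>))"
    unfolding inv_closed_transversal_def
  proof (intro conjI ballI)
    show "\<Union>(sel ` \<F>) \<subseteq> \<Union>(\<Union>\<F>)"
      using sel_sub by blast
    show "inv\<^bsub>G\<^esub> s \<in> \<Union>(sel ` \<F>)" if "s \<in> \<Union>(sel ` \<F>)" for s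
      using that sel_inv by blast
  next
    fix R assume "R \<in> \<Union>\<F>"
    then obtain \<T> where \<T>: "\<T> \<in> \<F>" "R \<in> \<T>" by blast
    then obtain s where s: "s \<in> sel \<T>" "s \<in> R" and unique: "\<And>t. t \<in> sel \<T> \<Longrightarrow> t \<in> R \<Longrightarrow> t = s"
      using sel_unique by metis
    show "\<exists>!s. s \<in> \<Union>(sel ` \<F>) \<and> s \<in> R"
    proof (rule ex1I[of _ s])
      show "s \<in> \<Union>(sel ` \<F>) \<and> s \<in> R" using s \<T>(1) by blast
      fix t assume "t \<in> \<Union>(sel ` \<F>) \<and> t \<in> R"
      then obtain \<T>' where "\<T>' \<in> \<F>" "t \<in> sel \<T>'" "t \<in> R" by blast
      then show "t = s" using same_family[of \<T> \<T>' R t] \<T> unique by blast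
    qed
  qed
  then show ?thesis by blast
qed

lemma inv_closed_transversal_image:
  assumes "pairwise disjnt \<T>" "\<And>R. R \<in> \<T> \<Longrightarrow> c R \<in> R" "\<And>R. R \<in> \<T> \<Longrightarrow> inv\<^bsub>G\<^esub> (c R) \<in> c ` \<T>"
  shows "inv_closed_transversal G \<T> (c ` \<T>)"
  unfolding inv_closed_transversal_def
proof (intro conjI ballI)
  show "c ` \<T> \<subseteq> \<Union>\<T>" using assms(2) by blast
  show "inv\<^bsub>G\<^esub> s \<in> c ` \<T>" if "s \<in> c ` \<T>" for s
    using that assms(3) by blast
next
  fix R assume R: "R \<in> \<T>"
  show "\<exists>!s. s \<in> c ` \<T> \<and> s \<in> R"
  proof (rule ex1I[of _ "c R"])
    show "c R \<in> c ` \<T> \<and> c R \<in> R" using R assms(2) by blast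
    fix s assume "s \<in> c ` \<T> \<and> s \<in> R"
    then obtain R' where R': "R' \<in> \<T>" "s = c R'" "s \<in> R" by blast
    then have "R' = R"
      using assms(1) R assms(2)[OF R'(1)] unfolding pairwise_def disjnt_def by blast
    then show "s = c R" using R'(2) by simp
  qed
qed

lemma (in group) inv_closed_transversal_bipartite:
  assumes "finite \<A>" "finite \<B>" "card \<A> = card \<B>"
    and disjoint: "pairwise disjnt (\<A> \<union> \<B>)" "\<A> \<inter> \<B> = {}" and "\<Union>\<A> \<subseteq> carrier G"
    and "\<And>A B. A \<in> \<A> \<Longrightarrow> B \<in> \<B> \<Longrightarrow> \<exists>e\<in>A. inv e \<in> B"
  shows "\<exists>S. inv_closed_transversal G (\<A> \<union> \<B>) S"
proof -
  obtain f where f: "bij_betw f \<A> \<B>"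
    using finite_same_card_bij assms(1-3) by blast
  have "\<forall>A\<in>\<A>. \<exists>e. e \<in> A \<and> inv e \<in> f A"
    using assms(7) bij_betwE[OF f] by blast
  then obtain e where e: "\<And>A. A \<in> \<A> \<Longrightarrow> e A \<in> A \<and> inv (e A) \<in> f A"
    by metis
  define c where "c R = (if R \<in> \<A> then e R else inv (e (inv_into \<A> f R)))" for R
  have c_mem: "c R \<in> R" if "R \<in> \<A> \<union> \<B>" for R
    using that e f by (auto simp: c_def bij_betw_def f_inv_into_f inv_into_into)
  have c_inv: "inv (c R) \<in> c ` (\<A> \<union> \<B>)" if "R \<in> \<A> \<union> \<B>" for R
  proof (cases "R \<in> \<A>")
    case True
    then have "f R \<in> \<B> - \<A>" "inv_into \<A> f (f R) = R"
      using f disjoint(2) by (auto simp: bij_betw_def)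
    then have "c (f R) = inv (c R)" using True by (simp add: c_def)
    then show ?thesis using \<open>f R \<in> \<B> - \<A>\<close> by (metis DiffD1 UnI2 image_eqI)
  next
    case False
    then have A: "inv_into \<A> f R \<in> \<A>" using that f by (auto simp: bij_betw_def inv_into_into)
    then have "e (inv_into \<A> f R) \<in> carrier G" using e assms(6) by blast
    then have "inv (c R) = c (inv_into \<A> f R)" using False A by (simp add: c_def)
    then show ?thesis using A by blast
  qed
  then show ?thesis
    using inv_closed_transversal_image[OF disjoint(1)] c_mem by blast
qed

locale group_subgroup = group G + subgroup H G for G (structure) and H
begin

section \<open>Perfect codes as inverse-closed transversals\<close>

lemma rcos_nontrivial_iff: "w \<in> carrier G \<Longrightarrow> H #> w \<in> rcosets H - {H} \<longleftrightarrow> w \<notin> H"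
  using rcosetsI[OF subset] coset_join1[OF _ _ subgroup_axioms] coset_join2[OF _ subgroup_axioms] by blast

lemma nontrivial_rcosetsE:
  assumes "R \<in> rcosets H - {H}"
  obtains w where "w \<in> carrier G - H" "R = H #> w"
  using assms rcos_nontrivial_iff by (auto simp: RCOSETS_def)

lemma Union_nontrivial_rcosets: "\<Union>(rcosets H - {H}) = carrier G - H"
proof
  have "R \<subseteq> carrier G - H" if "R \<in> rcosets H - {H}" for R
    using that rcos_disjoint[OF subgroup_axioms] subgroup_in_rcosets[OF is_group]
      rcosets_carrier[OF is_group]
    unfolding pairwise_def disjnt_def by blast
  then show "\<Union>(rcosets H - {H}) \<subseteq> carrier G - H" by blast
  show "carrier G - H \<subseteq> \<Union>(rcosets H - {H})"
    using rcos_nontrivial_iff rcos_self[OF _ subgroup_axioms] by blast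
qed

lemma ex1_code_neighbour_iff:
  assumes "S \<subseteq> carrier G" "v \<in> carrier G"
  shows "(\<exists>!c. c \<in> H \<and> cay_adj G S v c) \<longleftrightarrow> (\<exists>!s. s \<in> S \<and> s \<in> H #> inv v)"
proof -
  let ?P = "\<lambda>s. s \<in> S \<and> s \<in> H #> inv v"
  have "s \<in> H #> inv v \<longleftrightarrow> s \<otimes> v \<in> H" if "s \<in> carrier G" for s
    using rcos_module[OF is_group, of "inv v" s] that assms(2) by simp
  then have neighbour_iff: "c \<in> H \<and> cay_adj G S v c \<longleftrightarrow> (\<exists>s. ?P s \<and> c = s \<otimes> v)" for c
    unfolding cay_adj_def using assms by blast
  have inj: "inj_on (\<lambda>s. s \<otimes> v) S"
    using inj_on_g assms .
  show ?thesis
    unfolding neighbour_iff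
  proof
    assume "\<exists>!c. \<exists>s. ?P s \<and> c = s \<otimes> v"
    then obtain c where c: "\<exists>s. ?P s \<and> c = s \<otimes> v"
      and unique: "\<And>c'. \<exists>s. ?P s \<and> c' = s \<otimes> v \<Longrightarrow> c' = c" by auto
    then show "\<exists>!s. ?P s"
      using inj_onD[OF inj] by metis
  next
    assume "\<exists>!s. ?P s"
    then obtain s where "?P s" and "\<And>s'. ?P s' \<Longrightarrow> s' = s" by auto
    then show "\<exists>!c. \<exists>s. ?P s \<and> c = s \<otimes> v" by auto
  qed
qed

lemma inv_closed_transversal_if_perfect_code:
  assumes "cayley_set G S" "cay_perfect_code G S H"
  shows "inv_closed_transversal G (rcosets H - {H}) S"
proof -
  have S_carrier: "S \<subseteq> carrier G" using assms(1) by (auto simp: cayley_set_def)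
  have "S \<inter> H = {}"
  proof -
    have "\<not> cay_adj G S \<one> s" if "s \<in> H" for s
      using assms(2) that one_closed by (auto simp: cay_perfect_code_def)
    then show ?thesis using S_carrier by (fastforce simp: cay_adj_def)
  qed
  moreover have "\<exists>!s. s \<in> S \<and> s \<in> R" if "R \<in> rcosets H - {H}" for R
  proof -
    obtain w where w: "w \<in> carrier G - H" "R = H #> w"
      using nontrivial_rcosetsE[OF \<open>R \<in> rcosets H - {H}\<close>] .
    have "inv w \<in> carrier G - H"
      using w(1) m_inv_closed by (metis DiffD1 DiffD2 DiffI inv_closed inv_inv)
    then have "\<exists>!c. c \<in> H \<and> cay_adj G S (inv w) c"
      using assms(2) by (auto simp: cay_perfect_code_def)
    then show ?thesis
      using ex1_code_neighbour_iff[OF S_carrier, of "inv w"] w by simp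
  qed
  moreover have "\<forall>s\<in>S. inv s \<in> S" using assms(1) by (simp add: cayley_set_def)
  ultimately show ?thesis
    unfolding inv_closed_transversal_def Union_nontrivial_rcosets using S_carrier by blast
qed

lemma perfect_code_if_inv_closed_transversal:
  assumes "inv_closed_transversal G (rcosets H - {H}) S"
  shows "cayley_set G S" "cay_perfect_code G S H"
proof -
  have S_sub: "S \<subseteq> carrier G - H" and S_inv: "\<And>s. s \<in> S \<Longrightarrow> inv s \<in> S"
    and S_unique: "\<And>R. R \<in> rcosets H - {H} \<Longrightarrow> \<exists>!s. s \<in> S \<and> s \<in> R"
    using assms unfolding inv_closed_transversal_def Union_nontrivial_rcosets by simp_all
  show "cayley_set G S"
    using S_sub S_inv one_closed by (auto simp: cayley_set_def)
  show "cay_perfect_code G S H"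
    unfolding cay_perfect_code_def
  proof (intro conjI ballI subset)
    fix x y assume xy: "x \<in> H" "y \<in> H"
    show "\<not> cay_adj G S x y"
    proof
      assume "cay_adj G S x y"
      then obtain s where s: "s \<in> S" "y = s \<otimes> x" by (auto simp: cay_adj_def)
      moreover have "s \<in> carrier G" using s(1) S_sub by blast
      ultimately have "s = y \<otimes> inv x" using xy(1) by (simp add: m_assoc)
      then have "s \<in> H" using xy by simp
      then show False using s S_sub by blast
    qed
  next
    fix v assume v: "v \<in> carrier G - H"
    then have "inv v \<notin> H" using m_inv_closed by (metis DiffD1 DiffD2 inv_inv)
    then have "\<exists>!s. s \<in> S \<and> s \<in> H #> inv v"
      using S_unique rcos_nontrivial_iff v by simp
    moreover have "S \<subseteq> carrier G" using S_sub by blast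
    ultimately show "\<exists>!c. c \<in> H \<and> cay_adj G S v c"
      using ex1_code_neighbour_iff v by simp
  qed
qed

lemma subgroup_perfect_code_iff_inv_closed_transversal:
  "subgroup_perfect_code G H \<longleftrightarrow> (\<exists>S. inv_closed_transversal G (rcosets H - {H}) S)"
  unfolding subgroup_perfect_code_def
  using inv_closed_transversal_if_perfect_code perfect_code_if_inv_closed_transversal by blast

section \<open>Right cosets of normalizing elements\<close>

lemma rcos_eq_iff:
  assumes "a \<in> carrier G" "b \<in> carrier G"
  shows "H #> a = H #> b \<longleftrightarrow> a \<otimes> inv b \<in> H"
  using rcos_module[OF is_group assms(2,1)] repr_independence[OF _ assms(2) subgroup_axioms]
    rcos_self[OF assms(1) subgroup_axioms]
  by metis

lemma rcos_mult_left_absorb: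
  assumes "h \<in> H" "z \<in> carrier G"
  shows "H #> (h \<otimes> z) = H #> z"
  using assms by (simp add: rcos_eq_iff m_assoc)

lemma normalizer_iff_conj_image:
  "a \<in> normalizer G H \<longleftrightarrow> a \<in> carrier G \<and> (\<lambda>h. a \<otimes> h \<otimes> inv a) ` H = H"
proof -
  have "l_coset G a H #> inv a = (\<lambda>h. a \<otimes> h \<otimes> inv a) ` H"
    unfolding l_coset_def r_coset_def by auto
  then show ?thesis
    using subset unfolding normalizer_def stabilizer_def by auto
qed

lemma normalizer_carrier: "a \<in> normalizer G H \<Longrightarrow> a \<in> carrier G"
  by (simp add: normalizer_iff_conj_image)

lemma rcos_normalizer_iff:
  assumes "a \<in> normalizer G H"
  shows "s \<in> H #> a \<longleftrightarrow> (\<exists>h\<in>H. s = a \<otimes> h)"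
proof -
  have a: "a \<in> carrier G" and conj: "(\<lambda>h. a \<otimes> h \<otimes> inv a) ` H = H"
    using assms by (auto simp: normalizer_iff_conj_image)
  show ?thesis
  proof
    assume "s \<in> H #> a"
    then obtain h where h: "h \<in> H" "s = h \<otimes> a" unfolding r_coset_def by blast
    then obtain h' where h': "h' \<in> H" "h = a \<otimes> h' \<otimes> inv a" using conj by blast
    then have "s = a \<otimes> h'" using h(2) a mem_carrier[OF h'(1)] by (simp add: m_assoc)
    then show "\<exists>h\<in>H. s = a \<otimes> h" using h'(1) by blast
  next
    assume "\<exists>h\<in>H. s = a \<otimes> h"
    then obtain h where h: "h \<in> H" "s = a \<otimes> h" by blast
    then have "a \<otimes> h \<otimes> inv a \<in> H" using conj by blast
    moreover have "s = a \<otimes> h \<otimes> inv a \<otimes> a" using h a mem_carrier[OF h(1)] by (simp add: m_assoc)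
    ultimately show "s \<in> H #> a" using rcosI[OF _ subset a] by simp
  qed
qed

lemma normalizerI:
  assumes "finite H" "a \<in> carrier G" "\<And>h. h \<in> H \<Longrightarrow> a \<otimes> h \<in> H #> a"
  shows "a \<in> normalizer G H"
proof -
  let ?conj = "\<lambda>h. a \<otimes> h \<otimes> inv a"
  have "?conj ` H \<subseteq> H"
    using assms(2,3) rcos_module[OF is_group assms(2)] by auto
  moreover have "inj_on ?conj H"
    using assms(2) by (intro inj_onI) simp
  ultimately show ?thesis
    using endo_inj_surj[OF assms(1)] assms(2) by (simp add: normalizer_iff_conj_image)
qed

lemma rcos_normalizer_mult_closed:
  assumes "a \<in> normalizer G H" "a \<otimes> a \<in> H" "s \<in> H #> a" "t \<in> H #> a"
  shows "s \<otimes> t \<in> H"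
proof -
  have a: "a \<in> carrier G" using normalizer_carrier[OF assms(1)] .
  obtain h1 where h1: "h1 \<in> H" "s = h1 \<otimes> a" using assms(3) unfolding r_coset_def by blast
  obtain h2 where h2: "h2 \<in> H" "t = a \<otimes> h2"
    using assms(4) rcos_normalizer_iff[OF assms(1)] by blast
  have "s \<otimes> t = h1 \<otimes> (a \<otimes> a) \<otimes> h2" using h1 h2 a by (simp add: m_assoc)
  then show ?thesis using h1(1) h2(1) assms(2) by simp
qed

lemma rcos_normalizer_inv_closed:
  assumes "a \<in> normalizer G H" "a \<otimes> a \<in> H" "s \<in> H #> a"
  shows "inv s \<in> H #> a"
proof -
  have a: "a \<in> carrier G" using normalizer_carrier[OF assms(1)] .
  have s: "s \<in> carrier G" using assms(3) elemrcos_carrier[OF is_group a] by blast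
  have "a \<otimes> s \<in> H"
    using rcos_normalizer_mult_closed[OF assms(1,2) rcos_self[OF a subgroup_axioms] assms(3)] .
  then have "inv s \<otimes> inv a \<in> H" using a s by (simp add: inv_mult_group[symmetric])
  then show ?thesis using rcos_module[OF is_group a] a s by simp
qed

lemma subgroup_Un_rcos_normalizer:
  assumes "a \<in> normalizer G H" "a \<otimes> a \<in> H"
  shows "subgroup (H \<union> (H #> a)) G"
proof -
  have a: "a \<in> carrier G" using normalizer_carrier[OF assms(1)] .
  have rcos_carrier: "H #> a \<subseteq> carrier G" using r_coset_subset_G[OF subset a] .
  have left: "h \<otimes> s \<in> H #> a" if h: "h \<in> H" and s: "s \<in> H #> a" for h s
  proof -
    obtain h' where "h' \<in> H" "s = h' \<otimes> a" using s unfolding r_coset_def by blast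
    then show ?thesis using h a rcosI[OF _ subset a, of "h \<otimes> h'"] by (simp add: m_assoc)
  qed
  have right: "s \<otimes> h \<in> H #> a" if s: "s \<in> H #> a" and h: "h \<in> H" for s h
  proof -
    obtain h' where h': "h' \<in> H" "s = a \<otimes> h'" using s rcos_normalizer_iff[OF assms(1)] by blast
    then have "s \<otimes> h = a \<otimes> (h' \<otimes> h)" using h a by (simp add: m_assoc)
    then show ?thesis using h h'(1) rcos_normalizer_iff[OF assms(1)] by blast
  qed
  show ?thesis
  proof (rule subgroupI)
    show "H \<union> (H #> a) \<subseteq> carrier G" using subset rcos_carrier by blast
    show "H \<union> (H #> a) \<noteq> {}" using one_closed by (metis UnI1 empty_iff)
    show "inv x \<in> H \<union> (H #> a)" if "x \<in> H \<union> (H #> a)" for x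
      using that rcos_normalizer_inv_closed[OF assms, of x] m_inv_closed[of x] by blast
    show "x \<otimes> y \<in> H \<union> (H #> a)" if "x \<in> H \<union> (H #> a)" "y \<in> H \<union> (H #> a)" for x y
      using that left[of x y] right[of x y] rcos_normalizer_mult_closed[OF assms, of x y] m_closed[of x y]
      by blast
  qed
qed

lemma set_mult_generate_eq_Un_rcos:
  assumes "a \<in> normalizer G H" "a \<otimes> a \<in> H"
  shows "H <#> generate G {a} = H \<union> (H #> a)"
proof
  have a: "a \<in> carrier G" using normalizer_carrier[OF assms(1)] .
  interpret E: subgroup "H \<union> (H #> a)" G using subgroup_Un_rcos_normalizer[OF assms] .
  have "generate G {a} \<subseteq> H \<union> (H #> a)"
    using generate_subgroup_incl[OF _ E.subgroup_axioms] rcos_self[OF a subgroup_axioms] by blast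
  then show "H <#> generate G {a} \<subseteq> H \<union> (H #> a)"
    unfolding set_mult_def using E.m_closed by blast
  have "h \<in> H <#> generate G {a}" if "h \<in> H" for h
    using that generate.one[of G "{a}"] unfolding set_mult_def by force
  moreover have "H #> a \<subseteq> H <#> generate G {a}"
    using generate.incl[of a "{a}" G] unfolding set_mult_def r_coset_def by blast
  ultimately show "H \<union> (H #> a) \<subseteq> H <#> generate G {a}" by blast
qed

lemma involution_in_rcos_if_complement:
  assumes "a \<in> normalizer G H" "a \<otimes> a \<in> H" "is_complement G (H <#> generate G {a}) H L"
  shows "\<exists>e\<in>H #> a. e \<otimes> e = \<one>"
proof -
  have a: "a \<in> carrier G" using normalizer_carrier[OF assms(1)] .
  have L: "subgroup L G" "H \<inter> L = {\<one>}" "H <#> L = H \<union> (H #> a)"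
    using assms(3) by (simp_all only: is_complement_def set_mult_generate_eq_Un_rcos[OF assms(1,2)])
  have "a \<in> H <#> L" using L(3) rcos_self[OF a subgroup_axioms] by blast
  then obtain h l where hl: "h \<in> H" "l \<in> L" "a = h \<otimes> l" unfolding set_mult_def by blast
  have l: "l \<in> carrier G" using hl(2) subgroup.mem_carrier[OF L(1)] by blast
  have "l = inv h \<otimes> a" using hl l by (simp add: m_assoc[symmetric])
  then have l_rcos: "l \<in> H #> a" using hl(1) rcosI[OF _ subset a] by simp
  have "l \<otimes> l \<in> H \<inter> L"
    using rcos_normalizer_mult_closed[OF assms(1,2) l_rcos l_rcos] subgroup.m_closed[OF L(1) hl(2) hl(2)]
    by blast
  then show ?thesis using L(2) l_rcos by blast
qed

lemma complement_if_involution_in_rcos: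
  assumes "a \<in> normalizer G H" "a \<notin> H" "a \<otimes> a \<in> H" "e \<in> H #> a" "e \<otimes> e = \<one>"
  shows "is_complement G (H <#> generate G {a}) H {\<one>, e}"
proof -
  have a: "a \<in> carrier G" using normalizer_carrier[OF assms(1)] .
  obtain c where c: "c \<in> H" "e = c \<otimes> a" using assms(4) unfolding r_coset_def by blast
  have e_carrier: "e \<in> carrier G" using assms(4) elemrcos_carrier[OF is_group a] by blast
  have e_notin: "e \<notin> H"
    using c a assms(2) m_closed[OF m_inv_closed[OF c(1)]] by (metis inv_solve_left mem_carrier)
  have inv_e: "inv e = e" using inv_equality[OF assms(5) e_carrier e_carrier] .
  have "subgroup {\<one>, e} G"
    using assms(5) e_carrier inv_e by (intro subgroupI) auto
  moreover have "H <#> {\<one>, e} = H \<union> (H #> a)"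
  proof -
    have "H #> e = H #> a" using c a by (simp add: rcos_mult_left_absorb)
    then show ?thesis unfolding set_mult_def r_coset_def by auto
  qed
  moreover have "{\<one>, e} \<subseteq> H \<union> (H #> a)" using assms(4) one_closed by auto
  moreover have "H \<inter> {\<one>, e} = {\<one>}" using e_notin one_closed by auto
  ultimately show ?thesis
    unfolding is_complement_def set_mult_generate_eq_Un_rcos[OF assms(1,3)] by (intro conjI)
qed

lemma complement_iff_involution_in_rcos:
  assumes "a \<in> normalizer G H" "a \<notin> H" "a \<otimes> a \<in> H"
  shows "(\<exists>L. is_complement G (H <#> generate G {a}) H L) \<longleftrightarrow> (\<exists>e\<in>H #> a. e \<otimes> e = \<one>)"
  using involution_in_rcos_if_complement[OF assms(1,3)] complement_if_involution_in_rcos[OF assms]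
  by blast

section \<open>Right cosets in a double coset\<close>

definition dcoset_rcosets :: "'a \<Rightarrow> 'a set set" where
  "dcoset_rcosets x = (\<lambda>h. H #> (x \<otimes> h)) ` H"

lemma dcoset_rcosets_subset: "x \<in> carrier G \<Longrightarrow> dcoset_rcosets x \<subseteq> rcosets H"
  unfolding dcoset_rcosets_def using rcosetsI[OF subset] by auto

lemma rcos_in_dcoset_rcosets: "x \<in> carrier G \<Longrightarrow> H #> x \<in> dcoset_rcosets x"
  unfolding dcoset_rcosets_def using one_closed by (metis image_eqI r_one)

lemma trivial_coset_notin_dcoset_rcosets:
  assumes "x \<in> carrier G" "x \<notin> H"
  shows "H \<notin> dcoset_rcosets x"
proof
  assume "H \<in> dcoset_rcosets x"
  then obtain h where h: "h \<in> H" "H #> (x \<otimes> h) = H" unfolding dcoset_rcosets_def by auto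
  then have "x \<otimes> h \<in> H" using coset_join1[OF _ _ subgroup_axioms] assms(1) by simp
  then have "x \<otimes> h \<otimes> inv h \<in> H" using h(1) by simp
  then show False using assms h(1) by (simp add: m_assoc)
qed

lemma rcos_in_dcoset_rcosetsD:
  assumes "y \<in> carrier G" "H #> y \<in> dcoset_rcosets x"
  shows "\<exists>h1\<in>H. \<exists>h2\<in>H. y = h1 \<otimes> (x \<otimes> h2)"
proof -
  obtain h2 where "h2 \<in> H" "H #> y = H #> (x \<otimes> h2)" using assms(2) unfolding dcoset_rcosets_def by auto
  moreover have "y \<in> H #> y" using rcos_self[OF assms(1) subgroup_axioms] .
  ultimately show ?thesis unfolding r_coset_def by auto
qed

lemma dcoset_rcosets_eq:
  assumes "x \<in> carrier G" "y \<in> carrier G" "H #> y \<in> dcoset_rcosets x"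
  shows "dcoset_rcosets y = dcoset_rcosets x"
proof -
  obtain h1 h2 where h: "h1 \<in> H" "h2 \<in> H" "y = h1 \<otimes> (x \<otimes> h2)"
    using rcos_in_dcoset_rcosetsD[OF assms(2,3)] by blast
  have shift: "H #> (y \<otimes> h) = H #> (x \<otimes> (h2 \<otimes> h))" if "h \<in> carrier G" for h
    using that h assms(1) rcos_mult_left_absorb[OF h(1), of "x \<otimes> (h2 \<otimes> h)"] by (simp add: m_assoc)
  show ?thesis
  proof
    show "dcoset_rcosets y \<subseteq> dcoset_rcosets x"
      using shift h(2) unfolding dcoset_rcosets_def by auto
    have "H #> (x \<otimes> h) = H #> (y \<otimes> (inv h2 \<otimes> h))" if "h \<in> H" for h
      using shift[of "inv h2 \<otimes> h"] that h(2) by (simp add: m_assoc[symmetric])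
    then show "dcoset_rcosets x \<subseteq> dcoset_rcosets y"
      using h(2) unfolding dcoset_rcosets_def by auto
  qed
qed

lemma dcoset_rcosets_inv_eq:
  assumes "x \<in> carrier G" "y \<in> carrier G" "H #> y \<in> dcoset_rcosets x"
  shows "dcoset_rcosets (inv y) = dcoset_rcosets (inv x)"
proof -
  obtain h1 h2 where h: "h1 \<in> H" "h2 \<in> H" "y = h1 \<otimes> (x \<otimes> h2)"
    using rcos_in_dcoset_rcosetsD[OF assms(2,3)] by blast
  then have "inv y = inv h2 \<otimes> (inv x \<otimes> inv h1)"
    using assms(1) by (simp add: inv_mult_group m_assoc)
  then have "H #> inv y = H #> (inv x \<otimes> inv h1)"
    using h assms(1) by (simp add: rcos_mult_left_absorb)
  then have "H #> inv y \<in> dcoset_rcosets (inv x)"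
    using h(1) unfolding dcoset_rcosets_def by auto
  then show ?thesis using dcoset_rcosets_eq[OF inv_closed[OF assms(1)] inv_closed[OF assms(2)]] by blast
qed

lemma dcoset_rcosets_eq_if_common:
  assumes "x \<in> carrier G" "y \<in> carrier G" "R \<in> dcoset_rcosets x" "R \<in> dcoset_rcosets y"
  shows "dcoset_rcosets x = dcoset_rcosets y"
proof -
  obtain h where h: "h \<in> H" "R = H #> (x \<otimes> h)" using assms(3) unfolding dcoset_rcosets_def by auto
  then have "x \<otimes> h \<in> carrier G" using assms(1) by simp
  then show ?thesis using dcoset_rcosets_eq assms h(2) by metis
qed

lemma dcoset_rcosets_inv_compatible:
  assumes "x \<in> carrier G" "R \<in> dcoset_rcosets x" "R' \<in> dcoset_rcosets (inv x)"
  shows "\<exists>e\<in>R. inv e \<in> R'"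
proof -
  obtain h1 h2 where h: "h1 \<in> H" "R = H #> (x \<otimes> h1)" "h2 \<in> H" "R' = H #> (inv x \<otimes> h2)"
    using assms(2,3) unfolding dcoset_rcosets_def by auto
  let ?e = "inv h2 \<otimes> (x \<otimes> h1)"
  have "?e \<in> R" using h assms(1) rcosI[OF _ subset, of "inv h2" "x \<otimes> h1"] by simp
  moreover have "inv ?e = inv h1 \<otimes> (inv x \<otimes> h2)"
    using h assms(1) by (simp add: inv_mult_group m_assoc)
  then have "inv ?e \<in> R'" using h assms(1) rcosI[OF _ subset, of "inv h1" "inv x \<otimes> h2"] by simp
  ultimately show ?thesis by blast
qed

lemma dcoset_rcosets_eq_singleton_iff:
  assumes "finite H" "x \<in> carrier G"
  shows "dcoset_rcosets x = {H #> x} \<longleftrightarrow> x \<in> normalizer G H"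
proof
  assume singleton: "dcoset_rcosets x = {H #> x}"
  have "x \<otimes> h \<in> H #> x" if "h \<in> H" for h
  proof -
    have "H #> (x \<otimes> h) = H #> x" using singleton that unfolding dcoset_rcosets_def by blast
    then show ?thesis using rcos_self[OF _ subgroup_axioms, of "x \<otimes> h"] that assms(2) by simp
  qed
  then show "x \<in> normalizer G H" using normalizerI[OF assms] by blast
next
  assume x: "x \<in> normalizer G H"
  have "H #> (x \<otimes> h) = H #> x" if "h \<in> H" for h
    using that rcos_normalizer_iff[OF x] repr_independence[OF _ assms(2) subgroup_axioms] by metis
  then show "dcoset_rcosets x = {H #> x}"
    using rcos_in_dcoset_rcosets[OF assms(2)] unfolding dcoset_rcosets_def by auto
qed

lemma card_Union_rcosets:
  assumes "finite H" "finite \<T>" "\<T> \<subseteq> rcosets H"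
  shows "card (\<Union>\<T>) = card \<T> * card H"
proof -
  have "card H * card \<T> = card (\<Union>\<T>)"
  proof (rule card_partition)
    show "finite \<T>" by fact
    show "finite (\<Union>\<T>)" using assms rcosets_finite[OF _ subset] by blast
    show "card R = card H" if "R \<in> \<T>" for R
      using that assms(3) card_rcosets_equal[OF _ subset] by auto
    show "R \<inter> R' = {}" if "R \<in> \<T>" "R' \<in> \<T>" "R \<noteq> R'" for R R'
      using that assms(3) rcos_disjoint[OF subgroup_axioms] unfolding pairwise_def disjnt_def by blast
  qed
  then show ?thesis by (metis mult.commute)
qed

lemma finite_dcoset_rcosets: "finite H \<Longrightarrow> finite (dcoset_rcosets x)"
  unfolding dcoset_rcosets_def by simp

lemma card_dcoset_rcosets_inv:
  assumes fin: "finite H" and "x \<in> carrier G"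
  shows "card (dcoset_rcosets (inv x)) = card (dcoset_rcosets x)"
proof -
  have le: "card (\<Union>(dcoset_rcosets y)) \<le> card (\<Union>(dcoset_rcosets (inv y)))" if y: "y \<in> carrier G" for y
  proof (rule card_inj_on_le)
    show "m_inv G ` \<Union>(dcoset_rcosets y) \<subseteq> \<Union>(dcoset_rcosets (inv y))"
    proof
      fix z assume "z \<in> m_inv G ` \<Union>(dcoset_rcosets y)"
      then obtain h1 h2 where h: "h1 \<in> H" "h2 \<in> H" "z = inv (h1 \<otimes> (y \<otimes> h2))"
        unfolding dcoset_rcosets_def r_coset_def by blast
      then have "z = inv h2 \<otimes> (inv y \<otimes> inv h1)" using y by (simp add: inv_mult_group m_assoc)
      then show "z \<in> \<Union>(dcoset_rcosets (inv y))"
        using h(1,2) unfolding dcoset_rcosets_def r_coset_def by blast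
    qed
    show "inj_on (m_inv G) (\<Union>(dcoset_rcosets y))"
      using inv_inj dcoset_rcosets_subset[OF y] rcosets_part_G[OF subgroup_axioms] by (blast intro: inj_on_subset)
    show "finite (\<Union>(dcoset_rcosets (inv y)))"
      using finite_dcoset_rcosets[OF fin] dcoset_rcosets_subset[OF inv_closed[OF y]]
        rcosets_finite[OF _ subset fin] by blast
  qed
  have "card (\<Union>(dcoset_rcosets (inv x))) = card (\<Union>(dcoset_rcosets x))"
    using le[OF assms(2)] le[OF inv_closed[OF assms(2)]] assms(2) by simp
  moreover have "card H > 0" using fin one_closed card_gt_0_iff by blast
  ultimately show ?thesis
    using card_Union_rcosets[OF fin finite_dcoset_rcosets[OF fin]] dcoset_rcosets_subset assms(2) by simp
qed

lemma card_dcoset_rcosets_dvd: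
  assumes "finite H" "x \<in> carrier G"
  shows "card (dcoset_rcosets x) dvd card H"
proof -
  define K where "K = {k \<in> H. x \<otimes> k \<otimes> inv x \<in> H}"
  have K_carrier: "K \<subseteq> carrier G" using subset by (auto simp: K_def)
  have fibre: "{h \<in> H. H #> (x \<otimes> h) = H #> (x \<otimes> h0)} = K #> h0" if h0: "h0 \<in> H" for h0
  proof -
    have "H #> (x \<otimes> h) = H #> (x \<otimes> h0) \<longleftrightarrow> h \<otimes> inv h0 \<in> K" if "h \<in> H" for h
      using that h0 assms(2) by (simp add: rcos_eq_iff K_def inv_mult_group m_assoc)
    moreover have "h \<in> K #> h0 \<longleftrightarrow> h \<in> H \<and> h \<otimes> inv h0 \<in> K" for h
    proof
      assume "h \<in> K #> h0"
      then obtain k where "k \<in> K" "h = k \<otimes> h0" unfolding r_coset_def by blast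
      then show "h \<in> H \<and> h \<otimes> inv h0 \<in> K" using h0 by (simp add: K_def m_assoc)
    next
      assume h: "h \<in> H \<and> h \<otimes> inv h0 \<in> K"
      then have "h = (h \<otimes> inv h0) \<otimes> h0" using h0 by (simp add: m_assoc)
      then show "h \<in> K #> h0" using h unfolding r_coset_def by blast
    qed
    ultimately show ?thesis by blast
  qed
  have "card H = card K * card (dcoset_rcosets x)"
    unfolding dcoset_rcosets_def
  proof (rule card_eq_mult_card_image)
    show "finite H" by fact
    fix R assume "R \<in> (\<lambda>h. H #> (x \<otimes> h)) ` H"
    then obtain h0 where h0: "h0 \<in> H" "R = H #> (x \<otimes> h0)" by blast
    have "card (K #> h0) = card K"
      using card_rcosets_equal[OF rcosetsI[OF K_carrier] K_carrier] mem_carrier[OF h0(1)] by simp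
    then show "card {h \<in> H. H #> (x \<otimes> h) = R} = card K" using fibre[OF h0(1)] h0(2) by simp
  qed
  then show ?thesis by simp
qed

lemma finite_if_card_two_power: "card H = 2 ^ k \<Longrightarrow> finite H"
  using card_ge_0_finite[of H] by simp

lemma even_card_dcoset_rcosets:
  assumes "card H = 2 ^ k" "x \<in> carrier G" "x \<notin> normalizer G H"
  shows "even (card (dcoset_rcosets x))"
proof (rule even_if_dvd_two_power)
  have fin: "finite H" using finite_if_card_two_power[OF assms(1)] .
  show "card (dcoset_rcosets x) dvd 2 ^ k"
    using card_dcoset_rcosets_dvd[OF fin assms(2)] assms(1) by simp
  show "card (dcoset_rcosets x) \<noteq> 1"
    using rcos_in_dcoset_rcosets[OF assms(2)] dcoset_rcosets_eq_singleton_iff[OF fin assms(2)] assms(3)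
    by (metis card_1_singletonE singletonD)
qed

lemma inv_closed_transversal_self_inverse_dcoset_rcosets:
  assumes "card H = 2 ^ k" and x: "x \<in> carrier G" "x \<notin> normalizer G H"
    and self_inverse: "dcoset_rcosets (inv x) = dcoset_rcosets x"
  shows "\<exists>S. inv_closed_transversal G (dcoset_rcosets x) S"
proof -
  let ?D = "dcoset_rcosets x"
  have finD: "finite ?D" using finite_dcoset_rcosets[OF finite_if_card_two_power[OF assms(1)]] .
  have "even (card ?D)" using even_card_dcoset_rcosets[OF assms(1-3)] .
  then obtain \<A> where \<A>: "\<A> \<subseteq> ?D" "card \<A> = card ?D div 2"
    using obtain_subset_with_card_n by (metis div_le_dividend)
  define \<B> where "\<B> = ?D - \<A>"
  have fin_\<A>: "finite \<A>" using \<A>(1) finD finite_subset by blast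
  have partition: "\<A> \<union> \<B> = ?D" using \<A>(1) by (auto simp: \<B>_def)
  have "\<exists>S. inv_closed_transversal G (\<A> \<union> \<B>) S"
  proof (rule inv_closed_transversal_bipartite)
    show "finite \<A>" by fact
    show "finite \<B>" using finD by (simp add: \<B>_def)
    show "card \<A> = card \<B>"
      using \<A> \<open>even (card ?D)\<close> finD fin_\<A> by (auto simp: \<B>_def card_Diff_subset)
    show "pairwise disjnt (\<A> \<union> \<B>)"
      using partition dcoset_rcosets_subset[OF x(1)] pairwise_subset[OF rcos_disjoint[OF subgroup_axioms]]
      by metis
    show "\<A> \<inter> \<B> = {}" by (auto simp: \<B>_def)
    show "\<Union>\<A> \<subseteq> carrier G"
      using \<A>(1) dcoset_rcosets_subset[OF x(1)] rcosets_part_G[OF subgroup_axioms] by blast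
    show "\<exists>e\<in>A. inv e \<in> B" if "A \<in> \<A>" "B \<in> \<B>" for A B
      using that dcoset_rcosets_inv_compatible[OF x(1)] \<A>(1) self_inverse by (auto simp: \<B>_def)
  qed
  then show ?thesis using partition by simp
qed

lemma dcoset_rcosets_self_inverse_normalizer:
  assumes "finite H" "x \<in> normalizer G H" "dcoset_rcosets (inv x) = dcoset_rcosets x"
  shows "dcoset_rcosets x = {H #> x}" "x \<otimes> x \<in> H"
proof -
  have x: "x \<in> carrier G" "inv x \<in> carrier G" using normalizer_carrier[OF assms(2)] by simp_all
  show D: "dcoset_rcosets x = {H #> x}" using dcoset_rcosets_eq_singleton_iff[OF assms(1) x(1)] assms(2) ..
  then have "H #> inv x = H #> x" using rcos_in_dcoset_rcosets[OF x(2)] assms(3) by blast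
  then have "inv x \<otimes> inv x \<in> H" using rcos_eq_iff[OF x(2,1)] by simp
  then have "inv (inv x \<otimes> inv x) \<in> H" by (rule m_inv_closed)
  then show "x \<otimes> x \<in> H" using x(1) by (simp add: inv_mult_group)
qed

lemma inv_closed_transversal_dcoset_rcosets_pair:
  assumes "card H = 2 ^ k"
    and involution: "\<And>a. a \<in> normalizer G H - H \<Longrightarrow> a \<otimes> a \<in> H \<Longrightarrow> \<exists>e\<in>H #> a. e \<otimes> e = \<one>"
    and x: "x \<in> carrier G" "x \<notin> H"
  shows "\<exists>S. inv_closed_transversal G (dcoset_rcosets x \<union> dcoset_rcosets (inv x)) S"
proof -
  let ?D = "dcoset_rcosets x" and ?D' = "dcoset_rcosets (inv x)"
  have finH: "finite H" using finite_if_card_two_power[OF assms(1)] .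
  have x': "inv x \<in> carrier G" using x(1) by simp
  consider (disjoint_pair) "?D \<inter> ?D' = {}" | (self_inverse) "?D' = ?D"
    using dcoset_rcosets_eq_if_common[OF x(1) x'] by blast
  then show ?thesis
  proof cases
    case disjoint_pair
    have "pairwise disjnt (?D \<union> ?D')"
      using dcoset_rcosets_subset[OF x(1)] dcoset_rcosets_subset[OF x']
        pairwise_subset[OF rcos_disjoint[OF subgroup_axioms]] by (meson Un_least)
    moreover have "\<Union>?D \<subseteq> carrier G"
      using dcoset_rcosets_subset[OF x(1)] rcosets_part_G[OF subgroup_axioms] by blast
    ultimately show ?thesis
      using inv_closed_transversal_bipartite[OF finite_dcoset_rcosets[OF finH] finite_dcoset_rcosets[OF finH]
          card_dcoset_rcosets_inv[OF finH x(1), symmetric] _ disjoint_pair _ dcoset_rcosets_inv_compatible[OF x(1)]]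
      by blast
  next
    case self_inverse
    show ?thesis
    proof (cases "x \<in> normalizer G H")
      case True
      note D = dcoset_rcosets_self_inverse_normalizer[OF finH True self_inverse]
      obtain e where e: "e \<in> H #> x" "e \<otimes> e = \<one>" using involution True x(2) D(2) by blast
      have "inv e = e"
        using e elemrcos_carrier[OF is_group x(1)] by (metis inv_equality)
      then have "inv_closed_transversal G {H #> x} {e}"
        using e(1) by (auto simp: inv_closed_transversal_def)
      then show ?thesis using D(1) self_inverse by auto
    next
      case False
      then show ?thesis
        using inv_closed_transversal_self_inverse_dcoset_rcosets[OF assms(1) x(1) False self_inverse]
          self_inverse by simp
    qed
  qed
qed

lemma dcoset_rcosets_pair_eq:
  assumes "x \<in> carrier G" "y \<in> carrier G"
    and "z \<in> \<Union>(dcoset_rcosets x \<union> dcoset_rcosets (inv x))" "z \<in> \<Union>(dcoset_rcosets y \<union> dcoset_rcosets (inv y))"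
  shows "dcoset_rcosets x \<union> dcoset_rcosets (inv x) = dcoset_rcosets y \<union> dcoset_rcosets (inv y)"
proof -
  have "dcoset_rcosets z \<union> dcoset_rcosets (inv z) = dcoset_rcosets w \<union> dcoset_rcosets (inv w)"
    if w: "w \<in> carrier G" and z: "z \<in> \<Union>(dcoset_rcosets w \<union> dcoset_rcosets (inv w))" for w
  proof -
    obtain R where R: "R \<in> dcoset_rcosets w \<union> dcoset_rcosets (inv w)" "z \<in> R" using z by blast
    then have "R \<in> rcosets H"
      using dcoset_rcosets_subset[OF w] dcoset_rcosets_subset[OF inv_closed[OF w]] by blast
    then obtain u where u: "u \<in> carrier G" "R = H #> u" unfolding RCOSETS_def by blast
    then have zG: "z \<in> carrier G" and "H #> z = R"
      using R(2) elemrcos_carrier[OF is_group] repr_independence[OF _ _ subgroup_axioms] by auto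
    then show ?thesis
      using R(1) w dcoset_rcosets_eq[OF _ zG] dcoset_rcosets_inv_eq[OF _ zG]
      by (metis Un_iff inv_closed inv_inv sup_commute)
  qed
  then show ?thesis using assms by metis
qed

lemma ex_inv_closed_transversal:
  assumes "card H = 2 ^ k"
    and "\<And>a. a \<in> normalizer G H - H \<Longrightarrow> a \<otimes> a \<in> H \<Longrightarrow> \<exists>e\<in>H #> a. e \<otimes> e = \<one>"
  shows "\<exists>S. inv_closed_transversal G (rcosets H - {H}) S"
proof -
  define block where "block x = dcoset_rcosets x \<union> dcoset_rcosets (inv x)" for x
  have "block x \<subseteq> rcosets H - {H}" if "x \<in> carrier G - H" for x
  proof -
    have "inv x \<notin> H" using that m_inv_closed[of "inv x"] by auto
    then show ?thesis
      using that dcoset_rcosets_subset trivial_coset_notin_dcoset_rcosets by (auto simp: block_def)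
  qed
  moreover have "R \<in> \<Union>(block ` (carrier G - H))" if "R \<in> rcosets H - {H}" for R
    using nontrivial_rcosetsE[OF that] rcos_in_dcoset_rcosets by (metis DiffD1 UN_iff UnI1 block_def)
  ultimately have partition: "rcosets H - {H} = \<Union>(block ` (carrier G - H))" by blast
  have "pairwise (\<lambda>\<T> \<T>'. disjnt (\<Union>\<T>) (\<Union>\<T>')) (block ` (carrier G - H))"
    using dcoset_rcosets_pair_eq unfolding pairwise_def disjnt_def block_def by blast
  moreover have "\<exists>S. inv_closed_transversal G B S" if "B \<in> block ` (carrier G - H)" for B
    using that inv_closed_transversal_dcoset_rcosets_pair[OF assms] unfolding block_def by blast
  ultimately have "\<exists>S. inv_closed_transversal G (\<Union>(block ` (carrier G - H))) S"
    using inv_closed_transversal_Union by blast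
  then show ?thesis using partition by simp
qed

lemma involution_in_rcos_if_inv_closed_transversal:
  assumes "inv_closed_transversal G (rcosets H - {H}) S"
    and a: "a \<in> normalizer G H" "a \<notin> H" "a \<otimes> a \<in> H"
  shows "\<exists>e\<in>H #> a. e \<otimes> e = \<one>"
proof -
  have a_carrier: "a \<in> carrier G" using normalizer_carrier[OF a(1)] .
  have "H #> a \<in> rcosets H - {H}"
    using rcosetsI[OF subset a_carrier] coset_join1[OF _ a_carrier subgroup_axioms] a(2) by blast
  then obtain s where s: "s \<in> S" "s \<in> H #> a" and unique: "\<And>t. t \<in> S \<Longrightarrow> t \<in> H #> a \<Longrightarrow> t = s"
    using assms(1) unfolding inv_closed_transversal_def by metis
  have "inv s \<in> S" using assms(1) s(1) unfolding inv_closed_transversal_def by blast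
  moreover have "inv s \<in> H #> a" using rcos_normalizer_inv_closed[OF a(1,3) s(2)] .
  ultimately have "inv s = s" using unique by blast
  moreover have "s \<in> carrier G" using s(2) elemrcos_carrier[OF is_group a_carrier] by blast
  ultimately have "s \<otimes> s = \<one>" by (metis r_inv)
  then show ?thesis using s(2) by blast
qed

end

theorem theorem3p1:
  fixes G (structure) and H :: "'a set"
  assumes "group G" and "finite (carrier G)"
    and "subgroup H G" and "\<exists>k::nat. card H = 2 ^ k"
  shows "subgroup_perfect_code G H \<longleftrightarrow>
    (\<forall>a \<in> normalizer G H - H. a \<otimes> a \<in> H \<longrightarrow>
       (\<exists>L. is_complement G (H <#> generate G {a}) H L))"
proof -
  interpret group_subgroup G H using assms(1,3) by (simp add: group_subgroup_def)
  obtain k where k: "card H = 2 ^ k" using assms(4) by blast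
  have "subgroup_perfect_code G H \<longleftrightarrow> (\<exists>S. inv_closed_transversal G (rcosets H - {H}) S)"
    by (rule subgroup_perfect_code_iff_inv_closed_transversal)
  also have "\<dots> \<longleftrightarrow> (\<forall>a \<in> normalizer G H - H. a \<otimes> a \<in> H \<longrightarrow> (\<exists>e\<in>H #> a. e \<otimes> e = \<one>))"
    using ex_inv_closed_transversal[OF k] involution_in_rcos_if_inv_closed_transversal
    by blast
  also have "\<dots> \<longleftrightarrow> (\<forall>a \<in> normalizer G H - H. a \<otimes> a \<in> H \<longrightarrow>
       (\<exists>L. is_complement G (H <#> generate G {a}) H L))"
    using complement_iff_involution_in_rcos by blast
  finally show ?thesis .
qed

end
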